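(* Let $f\in\mathbb Z[x]$ with $3\nmid N_1(f)$, and for $i\geq1$ let $\omega_i=e^{2\pi i/3^i}$. (i) There exist $J\in\{0,1,2\}$, a sign $\pm$, and integers $A,b$ with $\pm\omega_1^Jf(\omega_1)=\delta+3A(\omega_1-1)+9b$, where $\delta=1,2,4$ according as $N_1(f)\equiv 1,4,7\pmod 9$; and then $\pm\omega_1^Jf(\omega_1)(1-\omega_1)=\delta(1-\omega_1)+9A+9B(1-\omega_1)$ with $B=b-A$. (ii) For every $i\geq 2$ there exist $h\in\mathbb Z[x]$ and $u(x)=\pm x^I(1+x)^J(x^4+1)^K$ with integers $I,J,K\geq 0$ (so $u(\omega_i)$ is a unit) such that $u(\omega_i)f(\omega_i)=1+(\omega_i-1)^5h(\omega_i)$. (iii) If in (ii) $3\mid h(1)$, then there exist $t\in\mathbb Z[x]$ and $u$ of the same form $\pm x^I(1+x)^J(x^4+1)^K$ with $u(\omega_i)f(\omega_i)=1+(\omega_i-1)^7t(\omega_i)$. (iv) If in (ii) $i=2$ and $3\nmid h(1)$, then for some $u$ of the form $\pm x^I(1+x)^J(x^4+1)^K$ and some $t\in\mathbb Z[x]$, $(1-\omega_2)u(\omega_2)f(\omega_2)=1-\omega_2+3\delta(\omega_2)+3(\omega_2-1)^2t(\omega_2)$ with $\delta(x)=x$ or $\delta(x)=-1$.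
   Context: $N_1(f)=f(\omega_1)f(\omega_1^2)$. *)

theory Defs
  imports "HOL-Analysis.Analysis" "HOL-Computational_Algebra.Polynomial"
begin

definition omega :: "nat \<Rightarrow> complex" where
  "omega i = exp (2 * of_real pi * \<i> / of_nat (3 ^ i))"

definition evc :: "int poly \<Rightarrow> complex \<Rightarrow> complex" where
  "evc p z = poly (map_poly of_int p) z"

definition N1 :: "int poly \<Rightarrow> complex" where
  "N1 f = evc f (omega 1) * evc f ((omega 1)^2)"

definition unit_form :: "int poly \<Rightarrow> bool" where
  "unit_form u \<longleftrightarrow> (\<exists>(s::int) I J K. s \<in> {1, -1} \<and>
      u = smult s (monom 1 I * [:1, 1:] ^ J * (monom 1 4 + 1) ^ K))"

end

theory Submission
  imports Defs
begin

text \<open>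
  Write \<open>\<lambda> = w - 1\<close> for a root of unity \<open>w\<close> of order \<open>3\<^sup>i\<close>, \<open>i \<ge> 2\<close>. Every element of
  \<open>\<int>[w]\<close> is an integer modulo \<open>\<lambda>\<close> (the value at 1 of a representing polynomial), and
  \<open>\<lambda>\<^sup>6\<close> divides 3. Hence if \<open>u f(w) \<equiv> 1 + a \<lambda>\<^sup>k\<close> and a unit \<open>e \<equiv> 1 + c \<lambda>\<^sup>k\<close> modulo
  \<open>\<lambda>\<^bsup>k+1\<^esup>\<close> with \<open>c\<close> prime to 3, then \<open>e\<^sup>j u f(w) \<equiv> 1 + (j c + a) \<lambda>\<^sup>k\<close>, and choosing
  \<open>j\<close> with \<open>3 | j c + a\<close> kills the \<open>\<lambda>\<^sup>k\<close>-term. The units \<open>w\<close>, \<open>-w(1+w)\<close>, \<open>w\<^sup>3\<close>,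
  \<open>-w\<^sup>6(1+w)\<^sup>2(1+w\<^sup>4)\<close> and \<open>(-w(1+w))\<^sup>3\<close> are \<open>1 \<plusminus> \<lambda>\<^sup>k\<close> modulo \<open>\<lambda>\<^bsup>k+1\<^esup>\<close> for
  \<open>k = 1, 2, 3, 4, 6\<close>: this gives (ii), and (iii), where \<open>3 | h(1)\<close> replaces the missing unit for
  \<open>k = 5\<close>. For (iv), at \<open>w = \<omega>\<^sub>2\<close> one has \<open>\<lambda>\<^sup>6 = 3 \<eta>\<close> with \<open>\<eta> \<equiv> -1\<close> modulo \<open>\<lambda>\<close>,
  and powers of \<open>(-w(1+w))\<^sup>3\<close> adjust \<open>h\<close> modulo \<open>\<lambda>\<^sup>2\<close>.

  Part (i) is arithmetic in \<open>\<int>[\<omega>\<^sub>1]\<close>: \<open>f(\<omega>\<^sub>1) = a + b \<omega>\<^sub>1\<close> with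
  \<open>N\<^sub>1(f) = a\<^sup>2 - a b + b\<^sup>2\<close>. A power of \<open>\<omega>\<^sub>1\<close> makes the coefficient of \<open>\<omega>\<^sub>1\<close> divisible
  by 3, and then \<open>N\<^sub>1(f) \<equiv> (a + b)\<^sup>2\<close> modulo 9 fixes \<open>a + b\<close> modulo 9 up to sign.
\<close>

lemma evc_pCons [simp]: "evc (pCons a p) z = of_int a + z * evc p z"
  unfolding evc_def by (simp add: map_poly_pCons)

lemma evc_0 [simp]: "evc 0 z = 0"
  unfolding evc_def by simp

lemma evc_1 [simp]: "evc 1 z = 1"
  by (simp add: one_pCons)

lemma evc_add [simp]: "evc (p + q) z = evc p z + evc q z"
proof (induction p arbitrary: q)
  case (pCons a p)
  then show ?case by (cases q) (simp_all add: algebra_simps)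
qed simp

lemma evc_minus [simp]: "evc (- p) z = - evc p z"
  by (induction p) (simp_all add: algebra_simps)

lemma evc_diff [simp]: "evc (p - q) z = evc p z - evc q z"
  using evc_add[of p "- q" z] by simp

lemma evc_smult [simp]: "evc (smult c p) z = of_int c * evc p z"
  by (induction p) (simp_all add: algebra_simps)

lemma evc_mult [simp]: "evc (p * q) z = evc p z * evc q z"
  by (induction p) (simp_all add: algebra_simps)

lemma evc_power [simp]: "evc (p ^ n) z = evc p z ^ n"
  by (induction n) simp_all

lemma evc_monom [simp]: "evc (monom 1 n) z = z ^ n"
  unfolding evc_def by (simp add: map_poly_monom poly_monom)

definition int_adjoin :: "complex \<Rightarrow> complex set" where
  "int_adjoin w = range (\<lambda>p. evc p w)"

lemma int_adjoin_evc [intro, simp]: "evc p w \<in> int_adjoin w"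
  unfolding int_adjoin_def by blast

lemma int_adjoin_of_int [intro, simp]: "of_int a \<in> int_adjoin w"
  using int_adjoin_evc[of "[:a:]" w] by simp

lemma int_adjoin_of_nat [intro, simp]: "of_nat n \<in> int_adjoin w"
  using int_adjoin_of_int[of "int n" w] by simp

lemma int_adjoin_numeral [intro, simp]: "numeral n \<in> int_adjoin w"
  using int_adjoin_of_int[of "numeral n" w] by simp

lemma int_adjoin_0 [intro, simp]: "0 \<in> int_adjoin w"
  using int_adjoin_of_int[of 0 w] by simp

lemma int_adjoin_1 [intro, simp]: "1 \<in> int_adjoin w"
  using int_adjoin_of_int[of 1 w] by simp

lemma int_adjoin_generator [intro, simp]: "w \<in> int_adjoin w"
  using int_adjoin_evc[of "monom 1 1" w] by simp

lemma int_adjoin_add [intro]: "x \<in> int_adjoin w \<Longrightarrow> y \<in> int_adjoin w \<Longrightarrow> x + y \<in> int_adjoin w"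
  unfolding int_adjoin_def by (auto simp flip: evc_add)

lemma int_adjoin_mult [intro]: "x \<in> int_adjoin w \<Longrightarrow> y \<in> int_adjoin w \<Longrightarrow> x * y \<in> int_adjoin w"
  unfolding int_adjoin_def by (auto simp flip: evc_mult)

lemma int_adjoin_uminus [intro]: "x \<in> int_adjoin w \<Longrightarrow> - x \<in> int_adjoin w"
  unfolding int_adjoin_def by (auto simp flip: evc_minus)

lemma int_adjoin_diff [intro]: "x \<in> int_adjoin w \<Longrightarrow> y \<in> int_adjoin w \<Longrightarrow> x - y \<in> int_adjoin w"
  using int_adjoin_add[of x w "- y"] int_adjoin_uminus[of y w] by simp

lemma int_adjoin_power [intro]: "x \<in> int_adjoin w \<Longrightarrow> x ^ n \<in> int_adjoin w"
  by (induction n) auto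

lemma int_adjoin_evc_at [intro]: "x \<in> int_adjoin w \<Longrightarrow> evc p x \<in> int_adjoin w"
  by (induction p) auto

lemma int_adjoin_geometric_sum: "(\<Sum>i<m. w ^ i) \<in> int_adjoin w"
  by (induction m) auto

lemmas int_adjoin_closed = int_adjoin_add int_adjoin_mult int_adjoin_uminus int_adjoin_diff
  int_adjoin_power int_adjoin_evc int_adjoin_of_int int_adjoin_of_nat int_adjoin_numeral
  int_adjoin_0 int_adjoin_1 int_adjoin_generator

text \<open>\<open>\<lambda> = w - 1\<close> generates the prime of \<open>\<int>[w]\<close> above 3 when \<open>w\<close> is a primitive
  \<open>3\<^sup>i\<close>-th root of unity.\<close>
definition lam_dvd :: "complex \<Rightarrow> nat \<Rightarrow> complex \<Rightarrow> bool" where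
  "lam_dvd w k z \<longleftrightarrow> (\<exists>y \<in> int_adjoin w. z = (w - 1) ^ k * y)"

lemma lam_dvd_0 [simp]: "lam_dvd w k 0"
  unfolding lam_dvd_def by auto

lemma lam_dvd_triv [intro]: "y \<in> int_adjoin w \<Longrightarrow> lam_dvd w k ((w - 1) ^ k * y)"
  unfolding lam_dvd_def by auto

lemma lam_dvd_power [intro]: "lam_dvd w k ((w - 1) ^ k)"
  using lam_dvd_triv[of 1 w k] by simp

lemma lam_dvd_imp_int_adjoin: "lam_dvd w k z \<Longrightarrow> z \<in> int_adjoin w"
  unfolding lam_dvd_def by auto

lemma lam_dvd_add [intro]: "lam_dvd w k x \<Longrightarrow> lam_dvd w k y \<Longrightarrow> lam_dvd w k (x + y)"
  unfolding lam_dvd_def by (metis distrib_left int_adjoin_add)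

lemma lam_dvd_uminus: "lam_dvd w k x \<Longrightarrow> lam_dvd w k (- x)"
  unfolding lam_dvd_def by (metis mult_minus_right int_adjoin_uminus)

lemma lam_dvd_diff [intro]: "lam_dvd w k x \<Longrightarrow> lam_dvd w k y \<Longrightarrow> lam_dvd w k (x - y)"
  using lam_dvd_add[of w k x "- y"] lam_dvd_uminus[of w k y] by simp

lemma lam_dvd_mult_left [intro]: "a \<in> int_adjoin w \<Longrightarrow> lam_dvd w k x \<Longrightarrow> lam_dvd w k (a * x)"
  unfolding lam_dvd_def by (metis int_adjoin_mult mult.left_commute)

lemma lam_dvd_mult_right [intro]: "a \<in> int_adjoin w \<Longrightarrow> lam_dvd w k x \<Longrightarrow> lam_dvd w k (x * a)"
  using lam_dvd_mult_left by (metis mult.commute)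

lemma lam_dvd_mult: "lam_dvd w j x \<Longrightarrow> lam_dvd w k y \<Longrightarrow> lam_dvd w (j + k) (x * y)"
  unfolding lam_dvd_def by (auto simp: power_add mult_ac)

lemma lam_dvd_mono:
  assumes "lam_dvd w k z" "j \<le> k"
  shows "lam_dvd w j z"
proof -
  obtain y where y: "y \<in> int_adjoin w" "z = (w - 1) ^ k * y"
    using assms(1) unfolding lam_dvd_def by blast
  then have "z = (w - 1) ^ j * ((w - 1) ^ (k - j) * y)"
    using assms(2) by (simp add: mult.assoc flip: power_add)
  with y(1) show ?thesis by (auto intro!: lam_dvd_triv)
qed

lemma lam_dvd_sub_1_iff: "lam_dvd w k (z - 1) \<longleftrightarrow> (\<exists>h. z = 1 + (w - 1) ^ k * evc h w)"
  unfolding lam_dvd_def int_adjoin_def by (auto simp: algebra_simps)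

lemma lam_dvd_evc_minus_poly_1: "lam_dvd w 1 (evc p w - of_int (poly p 1))"
proof -
  have "evc p w = evc ([:-1, 1:] * synthetic_div p 1 + [:poly p 1:]) w"
    by (simp only: synthetic_div_correct')
  then have "evc p w - of_int (poly p 1) = (w - 1) ^ 1 * evc (synthetic_div p 1) w"
    by (simp add: algebra_simps)
  then show ?thesis by (metis int_adjoin_evc lam_dvd_triv)
qed

lemma int_adjoin_residue:
  assumes "z \<in> int_adjoin w"
  obtains a where "lam_dvd w 1 (z - of_int a)"
  using assms lam_dvd_evc_minus_poly_1 unfolding int_adjoin_def by blast

lemma lam_dvd_of_int:
  assumes "lam_dvd w k 3" "3 dvd a"
  shows "lam_dvd w k (of_int a)"
proof -
  obtain c where "of_int a = of_int c * (3 :: complex)"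
    using assms(2) by (auto simp: mult.commute)
  then show ?thesis using assms(1) by auto
qed

lemma lam_dvd_evc_if_3_dvd:
  assumes "lam_dvd w 1 3" "3 dvd poly p 1"
  shows "lam_dvd w 1 (evc p w)"
  using lam_dvd_add[OF lam_dvd_evc_minus_poly_1[of w p] lam_dvd_of_int[OF assms]] by simp

lemma lam_cong_mult:
  assumes "1 \<le> k" "x \<in> int_adjoin w" "y \<in> int_adjoin w"
    and "lam_dvd w (k + 1) (x - 1 - of_int a * (w - 1) ^ k)"
    and "lam_dvd w (k + 1) (y - 1 - of_int b * (w - 1) ^ k)"
  shows "lam_dvd w (k + 1) (x * y - 1 - of_int (a + b) * (w - 1) ^ k)"
proof -
  have "x * y - 1 - of_int (a + b) * (w - 1) ^ k
      = (x - 1 - of_int a * (w - 1) ^ k) * y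
        + (y - 1 - of_int b * (w - 1) ^ k) * (1 + of_int a * (w - 1) ^ k)
        + of_int (a * b) * ((w - 1) ^ k * (w - 1) ^ k)"
    by (simp add: algebra_simps)
  moreover have "lam_dvd w (k + 1) (of_int (a * b) * ((w - 1) ^ k * (w - 1) ^ k))"
    using lam_dvd_mono[OF lam_dvd_mult[OF lam_dvd_power[of w k] lam_dvd_power[of w k]], of "k + 1"] assms(1)
    by auto
  moreover have "1 + of_int a * (w - 1) ^ k \<in> int_adjoin w"
    by (intro int_adjoin_closed)
  ultimately show ?thesis
    using assms(3-5) by (metis lam_dvd_add lam_dvd_mult_right)
qed

lemma lam_cong_power:
  assumes "1 \<le> k" "x \<in> int_adjoin w" "lam_dvd w (k + 1) (x - 1 - of_int c * (w - 1) ^ k)"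
  shows "lam_dvd w (k + 1) (x ^ j - 1 - of_int (int j * c) * (w - 1) ^ k)"
proof (induction j)
  case (Suc j)
  have "lam_dvd w (k + 1) (x * x ^ j - 1 - of_int (c + int j * c) * (w - 1) ^ k)"
    using assms Suc by (intro lam_cong_mult) auto
  then show ?case by (simp add: algebra_simps)
qed simp

lemma lam_dvd_next_digit:
  assumes "lam_dvd w k z"
  obtains a where "lam_dvd w (k + 1) (z - of_int a * (w - 1) ^ k)"
proof -
  obtain y where y: "y \<in> int_adjoin w" "z = (w - 1) ^ k * y"
    using assms unfolding lam_dvd_def by blast
  obtain a where "lam_dvd w 1 (y - of_int a)"
    using int_adjoin_residue[OF y(1)] by blast
  from lam_dvd_mult[OF lam_dvd_power this]
  have "lam_dvd w (k + 1) ((w - 1) ^ k * (y - of_int a))" .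
  then show thesis
    using that y(2) by (simp add: algebra_simps)
qed

lemma unit_form_mult:
  assumes "unit_form p" "unit_form q"
  shows "unit_form (p * q)"
proof -
  obtain s I J K where p: "s \<in> {1, -1}" "p = smult s (monom 1 I * [:1, 1:] ^ J * (monom 1 4 + 1) ^ K)"
    using assms(1) unfolding unit_form_def by blast
  obtain t I' J' K' where q: "t \<in> {1, -1}" "q = smult t (monom 1 I' * [:1, 1:] ^ J' * (monom 1 4 + 1) ^ K')"
    using assms(2) unfolding unit_form_def by blast
  have "monom (1 :: int) (I + I') = monom 1 I * monom 1 I'"
    by (simp add: mult_monom)
  then have "p * q = smult (s * t) (monom 1 (I + I') * [:1, 1:] ^ (J + J') * (monom 1 4 + 1) ^ (K + K'))"
    unfolding p(2) q(2) by (simp add: power_add algebra_simps)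
  moreover have "s * t \<in> {1, -1}"
    using p(1) q(1) by auto
  ultimately show ?thesis
    unfolding unit_form_def by blast
qed

definition unit_values :: "complex \<Rightarrow> complex set" where
  "unit_values w = {evc u w | u. unit_form u}"

lemma unit_values_intro:
  "s \<in> {1, -1} \<Longrightarrow> of_int s * w ^ I * (1 + w) ^ J * (w ^ 4 + 1) ^ K \<in> unit_values w"
  unfolding unit_values_def unit_form_def
  by (rule CollectI, rule exI[of _ "smult s (monom 1 I * [:1, 1:] ^ J * (monom 1 4 + 1) ^ K)"])
     (auto simp: algebra_simps)

lemma unit_values_1: "1 \<in> unit_values w"
  using unit_values_intro[of 1 w 0 0 0] by simp

lemma unit_values_mult:
  assumes "x \<in> unit_values w" "y \<in> unit_values w"
  shows "x * y \<in> unit_values w"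
proof -
  obtain p q where "unit_form p" "x = evc p w" "unit_form q" "y = evc q w"
    using assms unfolding unit_values_def by blast
  then show ?thesis
    unfolding unit_values_def by (auto intro!: exI[of _ "p * q"] unit_form_mult)
qed

lemma unit_values_power: "x \<in> unit_values w \<Longrightarrow> x ^ n \<in> unit_values w"
  by (induction n) (auto intro: unit_values_mult unit_values_1)

lemma unit_values_int_adjoin: "x \<in> unit_values w \<Longrightarrow> x \<in> int_adjoin w"
  unfolding unit_values_def by auto

lemma exists_nat_mult_add_dvd_3:
  fixes a c :: int
  assumes "\<not> 3 dvd c"
  obtains j :: nat where "3 dvd int j * c + a"
proof -
  have "3 dvd a \<or> 3 dvd c + a \<or> 3 dvd 2 * c + a"
    using assms by presburger
  then show thesis
    using that[of 0] that[of 1] that[of 2] by auto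
qed

lemma unit_lift_step:
  assumes "lam_dvd w 1 3" "1 \<le> k" "e \<in> unit_values w"
    and "lam_dvd w (k + 1) (e - 1 - of_int c * (w - 1) ^ k)" "\<not> 3 dvd c"
    and "\<exists>v \<in> unit_values w. lam_dvd w k (v * x - 1)"
  shows "\<exists>v \<in> unit_values w. lam_dvd w (k + 1) (v * x - 1)"
proof -
  obtain v where v: "v \<in> unit_values w" "lam_dvd w k (v * x - 1)"
    using assms(6) by blast
  obtain a where a: "lam_dvd w (k + 1) (v * x - 1 - of_int a * (w - 1) ^ k)"
    using lam_dvd_next_digit[OF v(2)] by (auto simp: algebra_simps)
  have vx: "v * x \<in> int_adjoin w"
    using lam_dvd_imp_int_adjoin[OF v(2)] int_adjoin_add[OF _ int_adjoin_1] by fastforce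
  obtain j :: nat where j: "3 dvd (int j * c + a)"
    using exists_nat_mult_add_dvd_3[OF assms(5)] by blast
  have e: "e \<in> int_adjoin w"
    using assms(3) by (rule unit_values_int_adjoin)
  have "lam_dvd w (k + 1) (e ^ j - 1 - of_int (int j * c) * (w - 1) ^ k)"
    by (rule lam_cong_power[OF assms(2) e assms(4)])
  from lam_cong_mult[OF assms(2) int_adjoin_power[OF e] vx this a]
  have "lam_dvd w (k + 1) (e ^ j * (v * x) - 1 - of_int (int j * c + a) * (w - 1) ^ k)" .
  moreover have "lam_dvd w (k + 1) (of_int (int j * c + a) * (w - 1) ^ k)"
    using lam_dvd_mult[OF lam_dvd_of_int[OF assms(1) j] lam_dvd_power[of w k]] by (simp add: add.commute)
  ultimately have "lam_dvd w (k + 1) ((e ^ j * (v * x) - 1 - of_int (int j * c + a) * (w - 1) ^ k)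
      + of_int (int j * c + a) * (w - 1) ^ k)"
    by (rule lam_dvd_add)
  then have "lam_dvd w (k + 1) (e ^ j * v * x - 1)"
    by (simp add: mult.assoc)
  moreover have "e ^ j * v \<in> unit_values w"
    using assms(3) v(1) by (intro unit_values_mult unit_values_power)
  ultimately show ?thesis by blast
qed

lemma lam_dvd_root_power:
  assumes "lam_dvd (w ^ m) k z"
  shows "lam_dvd w k z"
proof -
  obtain y where y: "y \<in> int_adjoin (w ^ m)" "z = (w ^ m - 1) ^ k * y"
    using assms unfolding lam_dvd_def by blast
  obtain p where "y = evc p (w ^ m)"
    using y(1) unfolding int_adjoin_def by blast
  then have "y \<in> int_adjoin w"
    by (simp add: int_adjoin_evc_at int_adjoin_power)
  moreover have "z = (w - 1) ^ k * ((\<Sum>i<m. w ^ i) ^ k * y)"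
    unfolding y(2) power_diff_1_eq by (simp add: power_mult_distrib mult.assoc)
  ultimately show ?thesis
    by (auto intro!: lam_dvd_triv int_adjoin_closed int_adjoin_geometric_sum)
qed

lemma lam_dvd_3_if_Phi9_root:
  assumes "w ^ 6 + w ^ 3 + 1 = 0"
  shows "lam_dvd w 6 3"
proof -
  have "3 - (w - 1) ^ 6 * (10 + 11 * w + 7 * w ^ 2 + 10 * w ^ 3 + 4 * w ^ 4 - 4 * w ^ 5)
      = (w ^ 6 + w ^ 3 + 1) * (- 7 + 49 * w - 91 * w ^ 2 + 74 * w ^ 3 - 28 * w ^ 4 + 4 * w ^ 5)"
    by (simp add: algebra_simps power_def numeral_eq_Suc)
  then have "3 = (w - 1) ^ 6 * (10 + 11 * w + 7 * w ^ 2 + 10 * w ^ 3 + 4 * w ^ 4 - 4 * w ^ 5)"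
    using assms by simp
  then show ?thesis
    by (metis lam_dvd_triv int_adjoin_closed)
qed

lemma omega_power:
  assumes "k \<le> i"
  shows "omega i ^ 3 ^ (i - k) = omega k"
proof -
  have "(3 :: nat) ^ i = 3 ^ (i - k) * 3 ^ k"
    using assms by (simp flip: power_add)
  then have "of_nat (3 ^ (i - k)) * (2 * of_real pi * \<i> / of_nat (3 ^ i))
      = (2 * of_real pi * \<i> / of_nat (3 ^ k) :: complex)"
    by (simp add: field_simps)
  then show ?thesis
    unfolding omega_def by (metis exp_of_nat_mult)
qed

lemma omega_1_root: "omega 1 ^ 2 + omega 1 + 1 = 0"
proof -
  have "omega 1 = cis (2 * pi / 3)"
    unfolding omega_def cis_conv_exp by (simp add: field_simps)
  also have "\<dots> = Complex (- 1 / 2) (sqrt 3 / 2)"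
    by (simp add: complex_eq_iff cos_120 sin_120)
  finally have omega_1: "omega 1 = Complex (- 1 / 2) (sqrt 3 / 2)" .
  show ?thesis
    unfolding omega_1 by (simp add: complex_eq_iff power2_eq_square)
qed

lemma omega_2_root: "omega 2 ^ 6 + omega 2 ^ 3 + 1 = 0"
proof -
  have "omega 2 ^ 3 = omega 1"
    using omega_power[of 1 2] by simp
  then show ?thesis
    using omega_1_root by (metis power_mult num_double numeral_times_numeral mult.commute)
qed

lemma lam_dvd_omega_3:
  assumes "2 \<le> i"
  shows "lam_dvd (omega i) 6 3"
  using lam_dvd_3_if_Phi9_root[OF omega_2_root] omega_power[OF assms]
  by (metis lam_dvd_root_power)

lemma ex_unit_values_lam_dvd_iff:
  "(\<exists>v \<in> unit_values w. lam_dvd w k (v * x - 1))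
    \<longleftrightarrow> (\<exists>h u. unit_form u \<and> evc u w * x = 1 + (w - 1) ^ k * evc h w)"
  unfolding unit_values_def lam_dvd_sub_1_iff by blast

lemma lam_cong_neg_w_1w:
  assumes "lam_dvd w 6 3"
  shows "lam_dvd w 3 (- (w * (1 + w)) - 1 + (w - 1) ^ 2)"
proof -
  have eq: "- (w * (1 + w)) - 1 + (w - 1) ^ 2 = - w * 3"
    by (simp add: algebra_simps power2_eq_square)
  have "lam_dvd w 3 3"
    using lam_dvd_mono[OF assms] by simp
  then show ?thesis
    unfolding eq by (intro lam_dvd_mult_left int_adjoin_closed)
qed

lemma lam_cong_w3:
  assumes "lam_dvd w 6 3"
  shows "lam_dvd w 4 (w ^ 3 - 1 - (w - 1) ^ 3)"
proof -
  have eq: "w ^ 3 - 1 - (w - 1) ^ 3 = (w ^ 2 - w) * 3"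
    by (simp add: algebra_simps power2_eq_square power3_eq_cube)
  have "lam_dvd w 4 3"
    using lam_dvd_mono[OF assms] by simp
  then show ?thesis
    unfolding eq by (intro lam_dvd_mult_left int_adjoin_closed)
qed

lemma lam_cong_neg_w6_1w2_1w4:
  assumes "lam_dvd w 6 3"
  shows "lam_dvd w 5 (- (w ^ 6 * (1 + w) ^ 2 * (w ^ 4 + 1)) - 1 - (w - 1) ^ 4)"
proof -
  define L where "L = w - 1"
  have eq: "- (w ^ 6 * (1 + w) ^ 2 * (w ^ 4 + 1)) - 1 - (w - 1) ^ 4
      = (- 3 - 24 * L - 102 * L ^ 2 - 272 * L ^ 3 - 507 * L ^ 4) * 3
        + L ^ 5 * (- 2072 - 2101 * L - 1582 * L ^ 2 - 871 * L ^ 3 - 340 * L ^ 4 - 89 * L ^ 5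
          - 14 * L ^ 6 - L ^ 7)"
    unfolding L_def by (simp add: algebra_simps power_def numeral_eq_Suc)
  have "lam_dvd w 5 3"
    using lam_dvd_mono[OF assms] by simp
  then show ?thesis
    unfolding eq L_def by (intro lam_dvd_add lam_dvd_mult_left lam_dvd_triv int_adjoin_closed)
qed

lemma lam_cong_neg_w_1w_cube:
  assumes "lam_dvd w 6 3"
  shows "lam_dvd w 7 ((- (w * (1 + w))) ^ 3 - 1 + (w - 1) ^ 6)"
proof -
  define L where "L = w - 1"
  have eq: "(- (w * (1 + w))) ^ 3 - 1 + (w - 1) ^ 6
      = (- L + L ^ 3 + 6 * w * L - 3 * w * L ^ 3 - 9 * w ^ 2 * L) * (3 * L)
        + (- w + 3 * w ^ 2 - 3 * w ^ 3) * (3 * 3)"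
    unfolding L_def by (simp add: algebra_simps power_def numeral_eq_Suc)
  have L3: "lam_dvd w 7 (3 * L)"
    using lam_dvd_mult[OF assms lam_dvd_power[of w 1]] unfolding L_def by simp
  have L9: "lam_dvd w 7 (3 * 3)"
    using lam_dvd_mono[OF lam_dvd_mult[OF assms assms], of 7] by simp
  have "L \<in> int_adjoin w"
    unfolding L_def by (intro int_adjoin_closed)
  then show ?thesis
    unfolding eq by (intro lam_dvd_add lam_dvd_mult_left[OF _ L3] lam_dvd_mult_left[OF _ L9] int_adjoin_closed)
qed

lemma unit_mult_cong_1_mod_lam5:
  assumes three: "lam_dvd w 6 3" and f1: "\<not> 3 dvd poly f 1"
  shows "\<exists>v \<in> unit_values w. lam_dvd w 5 (v * evc f w - 1)"
proof -
  have three1: "lam_dvd w 1 3"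
    using lam_dvd_mono[OF three] by simp
  define s :: int where "s = (if poly f 1 mod 3 = 1 then 1 else - 1)"
  have s: "s \<in> {1, -1}" "3 dvd s * poly f 1 - 1"
    unfolding s_def using f1 by (auto, presburger+)
  have "lam_dvd w 1 (evc (smult s f - 1) w)"
    using s(2) by (intro lam_dvd_evc_if_3_dvd three1) simp
  moreover have "of_int s \<in> unit_values w"
    using unit_values_intro[OF s(1), of w 0 0 0] by simp
  ultimately have S1: "\<exists>v \<in> unit_values w. lam_dvd w 1 (v * evc f w - 1)"
    by auto
  have S2: "\<exists>v \<in> unit_values w. lam_dvd w 2 (v * evc f w - 1)"
    using unit_lift_step[OF three1 _ _ _ _ S1, where e = w and c = 1]
      unit_values_intro[of 1 w 1 0 0] by (simp add: numeral_2_eq_2)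
  have S3: "\<exists>v \<in> unit_values w. lam_dvd w 3 (v * evc f w - 1)"
    using unit_lift_step[OF three1 _ _ _ _ S2, where e = "- (w * (1 + w))" and c = "- 1"]
      unit_values_intro[of "- 1" w 1 1 0] lam_cong_neg_w_1w[OF three] by simp
  have S4: "\<exists>v \<in> unit_values w. lam_dvd w 4 (v * evc f w - 1)"
    using unit_lift_step[OF three1 _ _ _ _ S3, where e = "w ^ 3" and c = 1]
      unit_values_intro[of 1 w 3 0 0] lam_cong_w3[OF three] by simp
  show ?thesis
    using unit_lift_step[OF three1 _ _ _ _ S4, where e = "- (w ^ 6 * (1 + w) ^ 2 * (w ^ 4 + 1))" and c = 1]
      unit_values_intro[of "- 1" w 6 2 1] lam_cong_neg_w6_1w2_1w4[OF three] by simp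
qed

lemma unit_mult_cong_1_mod_lam7:
  assumes three: "lam_dvd w 6 3" and "unit_form u"
    and uf: "evc u w * x = 1 + (w - 1) ^ 5 * evc h w" and h1: "3 dvd poly h 1"
  shows "\<exists>v \<in> unit_values w. lam_dvd w 7 (v * x - 1)"
proof -
  have three1: "lam_dvd w 1 3"
    using lam_dvd_mono[OF three] by simp
  have "lam_dvd w (5 + 1) ((w - 1) ^ 5 * evc h w)"
    by (rule lam_dvd_mult[OF lam_dvd_power lam_dvd_evc_if_3_dvd[OF three1 h1]])
  then have S6: "\<exists>v \<in> unit_values w. lam_dvd w 6 (v * x - 1)"
    using assms(2) uf unfolding unit_values_def by auto
  show ?thesis
    using unit_lift_step[OF three1 _ _ _ _ S6, where e = "(- (w * (1 + w))) ^ 3" and c = "- 1"]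
      unit_values_power[OF unit_values_intro[of "- 1" w 1 1 0], of 3] lam_cong_neg_w_1w_cube[OF three]
    by simp
qed

lemma lam_dvd_2_sub_multiple:
  assumes "lam_dvd w 1 3" "lam_dvd w 1 z"
  obtains j :: nat where "lam_dvd w 2 (z - of_nat j * (w - 1))"
proof -
  obtain y where y: "y \<in> int_adjoin w" "z = (w - 1) * y"
    using assms(2) unfolding lam_dvd_def by auto
  obtain c where c: "lam_dvd w 1 (y - of_int c)"
    using int_adjoin_residue[OF y(1)] by blast
  define j where "j = nat (c mod 3)"
  have "3 dvd c - int j"
    unfolding j_def by (simp add: mod_eq_dvd_iff[symmetric])
  then have "lam_dvd w 1 ((y - of_int c) + of_int (c - int j))"
    using c lam_dvd_of_int[OF assms(1)] by blast
  then have "lam_dvd w 1 (y - of_nat j)"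
    by simp
  from lam_dvd_mult[OF lam_dvd_power[of w 1] this]
  have "lam_dvd w 2 ((w - 1) ^ 1 * (y - of_nat j))"
    by (simp add: numeral_2_eq_2)
  also have "(w - 1) ^ 1 * (y - of_nat j) = z - of_nat j * (w - 1)"
    using y(2) by (simp add: algebra_simps)
  finally show thesis
    by (rule that)
qed

lemma unit_power_shift_lam6_digit:
  assumes three: "lam_dvd w 6 3" and g: "g \<in> int_adjoin w"
  obtains s where "s \<in> int_adjoin w"
    "(- (w * (1 + w))) ^ (3 * j) * (1 + (w - 1) ^ 5 * g)
      = 1 + (w - 1) ^ 5 * (g - of_nat j * (w - 1) + (w - 1) ^ 2 * s)"
proof -
  define e where "e = (- (w * (1 + w))) ^ 3"
  have "lam_dvd w (6 + 1) (e ^ j - 1 - of_int (int j * - 1) * (w - 1) ^ 6)"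
    using lam_cong_neg_w_1w_cube[OF three]
    by (intro lam_cong_power) (auto simp: e_def intro!: int_adjoin_closed)
  then have "lam_dvd w 7 ((e ^ j - 1 + of_nat j * (w - 1) ^ 6) * (1 + (w - 1) ^ 5 * g)
      - (w - 1) ^ 7 * (of_nat j * (w - 1) ^ 4 * g))"
    using g by (intro lam_dvd_diff lam_dvd_mult_right lam_dvd_triv int_adjoin_closed) simp_all
  then obtain s where s: "s \<in> int_adjoin w"
    "(e ^ j - 1 + of_nat j * (w - 1) ^ 6) * (1 + (w - 1) ^ 5 * g)
      - (w - 1) ^ 7 * (of_nat j * (w - 1) ^ 4 * g) = (w - 1) ^ 7 * s"
    unfolding lam_dvd_def by blast
  have "e ^ j * (1 + (w - 1) ^ 5 * g)
      = 1 + (w - 1) ^ 5 * (g - of_nat j * (w - 1) + (w - 1) ^ 2 * s)"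
    using s(2) by (simp add: algebra_simps power_def numeral_eq_Suc)
  then show thesis
    using that s(1) unfolding e_def by (simp add: power_mult)
qed

lemma unit_power_match_lam2_residue:
  assumes three: "lam_dvd w 6 3" and g: "g \<in> int_adjoin w"
    and \<eta>: "\<eta> \<in> int_adjoin w" "lam_dvd w 1 (\<eta> + 1)" and c: "lam_dvd w 1 (- \<eta> * g - c)"
  obtains j g' where "(- (w * (1 + w))) ^ (3 * j) * (1 + (w - 1) ^ 5 * g) = 1 + (w - 1) ^ 5 * g'"
    "lam_dvd w 2 (- \<eta> * g' - c)"
proof -
  have three1: "lam_dvd w 1 3"
    using lam_dvd_mono[OF three] by simp
  obtain j :: nat where j: "lam_dvd w 2 (- \<eta> * g - c - of_nat j * (w - 1))"
    using lam_dvd_2_sub_multiple[OF three1 c] by blast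
  obtain s where s: "s \<in> int_adjoin w"
    "(- (w * (1 + w))) ^ (3 * j) * (1 + (w - 1) ^ 5 * g)
      = 1 + (w - 1) ^ 5 * (g - of_nat j * (w - 1) + (w - 1) ^ 2 * s)"
    using unit_power_shift_lam6_digit[OF three g] by blast
  from lam_dvd_mult[OF lam_dvd_power[of w 1] \<eta>(2)]
  have "lam_dvd w 2 (of_nat j * ((w - 1) * (\<eta> + 1)))"
    by (auto simp: numeral_2_eq_2)
  moreover have "lam_dvd w 2 ((w - 1) ^ 2 * (- \<eta> * s))"
    using \<eta>(1) s(1) by (intro lam_dvd_triv int_adjoin_closed)
  ultimately have "lam_dvd w 2 ((- \<eta> * g - c - of_nat j * (w - 1)) + of_nat j * ((w - 1) * (\<eta> + 1))
      + (w - 1) ^ 2 * (- \<eta> * s))"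
    using j by (intro lam_dvd_add)
  also have "(- \<eta> * g - c - of_nat j * (w - 1)) + of_nat j * ((w - 1) * (\<eta> + 1)) + (w - 1) ^ 2 * (- \<eta> * s)
      = - \<eta> * (g - of_nat j * (w - 1) + (w - 1) ^ 2 * s) - c"
    by (simp add: algebra_simps)
  finally show thesis
    using that s(2) by blast
qed

lemma unit_mult_lam_expansion_Phi9_root:
  assumes root: "w ^ 6 + w ^ 3 + 1 = 0" and u: "unit_form u"
    and uf: "evc u w * x = 1 + (w - 1) ^ 5 * evc h w" and h1: "\<not> 3 dvd poly h 1"
  shows "\<exists>u' t d. unit_form u' \<and> d \<in> {[:0, 1:], [:-1:]} \<and>
           (1 - w) * evc u' w * x = 1 - w + 3 * evc d w + 3 * (w - 1) ^ 2 * evc t w"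
proof -
  have three: "lam_dvd w 6 3"
    using lam_dvd_3_if_Phi9_root[OF root] .
  have three1: "lam_dvd w 1 3"
    using lam_dvd_mono[OF three] by simp
  define \<eta>p :: "int poly" where "\<eta>p = [:0, -2, 5, -7, 5, -2:]"
  define \<eta> where "\<eta> = evc \<eta>p w"
  have "(w - 1) ^ 6 = (w ^ 6 + w ^ 3 + 1) + 3 * \<eta>"
    unfolding \<eta>_def \<eta>p_def by (simp add: algebra_simps power_def numeral_eq_Suc)
  then have lam6: "(w - 1) ^ 6 = 3 * \<eta>"
    using root by simp
  have \<eta>1: "lam_dvd w 1 (\<eta> + 1)"
    using lam_dvd_evc_minus_poly_1[of w \<eta>p] unfolding \<eta>_def \<eta>p_def by simp
  define d :: "int poly" where "d = (if poly h 1 mod 3 = 1 then [:0, 1:] else [:-1:])"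
  have d: "d \<in> {[:0, 1:], [:-1:]}"
    unfolding d_def by simp
  have "3 dvd poly (- (\<eta>p * h) - d) 1"
    unfolding d_def \<eta>p_def using h1 by simp presburger
  then have "lam_dvd w 1 (- \<eta> * evc h w - evc d w)"
    using lam_dvd_evc_if_3_dvd[OF three1] unfolding \<eta>_def by fastforce
  then obtain j g' where shift: "(- (w * (1 + w))) ^ (3 * j) * (1 + (w - 1) ^ 5 * evc h w)
      = 1 + (w - 1) ^ 5 * g'" and "lam_dvd w 2 (- \<eta> * g' - evc d w)"
    using unit_power_match_lam2_residue[OF three int_adjoin_evc _ \<eta>1] unfolding \<eta>_def by blast
  then obtain t where t: "- \<eta> * g' - evc d w = (w - 1) ^ 2 * evc t w"
    unfolding lam_dvd_def int_adjoin_def by auto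
  have "- (w * (1 + w)) \<in> unit_values w"
    using unit_values_intro[of "- 1" w 1 1 0] by simp
  moreover have "evc u w \<in> unit_values w"
    using u unfolding unit_values_def by blast
  ultimately have "(- (w * (1 + w))) ^ (3 * j) * evc u w \<in> unit_values w"
    by (intro unit_values_mult unit_values_power)
  then obtain u' where u': "unit_form u'" "evc u' w = (- (w * (1 + w))) ^ (3 * j) * evc u w"
    unfolding unit_values_def by auto
  define L where "L = w - 1"
  have "(1 - w) * evc u' w * x = - L * (1 + L ^ 5 * g')"
    using shift uf unfolding u'(2) L_def by (simp add: mult.assoc)
  also have "\<dots> = - L - L ^ 6 * g'"
    by (simp add: algebra_simps power_def numeral_eq_Suc)
  also have "\<dots> = 1 - w + 3 * (- \<eta> * g')"
    using lam6 unfolding L_def by simp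
  also have "\<dots> = 1 - w + 3 * evc d w + 3 * (w - 1) ^ 2 * evc t w"
    using t by (simp add: algebra_simps)
  finally show ?thesis
    using u'(1) d by blast
qed

lemma poly_div_Phi3:
  fixes f :: "'a :: comm_ring_1 poly"
  shows "\<exists>q a b. f = [:1, 1, 1:] * q + [:a, b:]"
proof (induction f)
  case 0
  show ?case
    by (rule exI[of _ 0], rule exI[of _ 0], rule exI[of _ 0]) simp
next
  case (pCons c p)
  then obtain q a b where "p = [:1, 1, 1:] * q + [:a, b:]"
    by blast
  then have "pCons c p = [:1, 1, 1:] * pCons b q + [:c - b, a - b:]"
    by (simp add: algebra_simps)
  then show ?case
    by blast
qed

lemma Phi3_root_cube:
  fixes \<rho> :: "'a :: comm_ring_1"
  assumes "\<rho> ^ 2 + \<rho> + 1 = 0"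
  shows "\<rho> ^ 3 = 1"
proof -
  have "\<rho> ^ 3 - 1 = (\<rho> - 1) * (\<rho> ^ 2 + \<rho> + 1)"
    by (simp add: algebra_simps power2_eq_square power3_eq_cube)
  then show ?thesis
    using assms by simp
qed

lemma Phi3_root_square:
  fixes \<rho> :: "'a :: comm_ring_1"
  assumes "\<rho> ^ 2 + \<rho> + 1 = 0"
  shows "(\<rho> ^ 2) ^ 2 + \<rho> ^ 2 + 1 = 0"
proof -
  have "(\<rho> ^ 2) ^ 2 = \<rho> ^ 3 * \<rho>"
    by (simp flip: power_mult power_Suc2)
  then show ?thesis
    using assms Phi3_root_cube[OF assms] by (simp add: algebra_simps)
qed

lemma norm_at_Phi3_root:
  fixes \<rho> :: "'a :: comm_ring_1"
  assumes "\<rho> ^ 2 + \<rho> + 1 = 0"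
  shows "(of_int a + of_int b * \<rho>) * (of_int a + of_int b * \<rho> ^ 2) = of_int (a ^ 2 - a * b + b ^ 2)"
proof -
  have "\<rho> ^ 3 = 1"
    using Phi3_root_cube[OF assms] .
  have "(of_int a + of_int b * \<rho>) * (of_int a + of_int b * \<rho> ^ 2)
      = of_int a ^ 2 + of_int a * of_int b * (\<rho> ^ 2 + \<rho> + 1) - of_int a * of_int b
        + of_int b ^ 2 * \<rho> ^ 3"
    by (simp add: algebra_simps power2_eq_square power3_eq_cube)
  with \<open>\<rho> ^ 3 = 1\<close> show ?thesis
    using assms by simp
qed

lemma three_dvd_norm_if_three_dvd_trace:
  fixes a b :: int
  assumes "3 dvd a + b"
  shows "3 dvd a ^ 2 - a * b + b ^ 2"
proof -
  have "a ^ 2 - a * b + b ^ 2 = (a + b) ^ 2 - 3 * (a * b)"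
    by (simp add: power2_eq_square algebra_simps)
  moreover have "3 dvd (a + b) ^ 2"
    using assms by (simp add: power2_eq_square)
  ultimately show ?thesis
    by (metis dvd_diff dvd_triv_left)
qed

lemma rotate_into_3_dvd_coeff:
  fixes \<rho> :: "'a :: comm_ring_1" and a b :: int
  assumes root: "\<rho> ^ 2 + \<rho> + 1 = 0" and N: "\<not> 3 dvd a ^ 2 - a * b + b ^ 2"
  obtains J :: nat and x y :: int where "J \<in> {0, 1, 2}"
    "\<rho> ^ J * (of_int a + of_int b * \<rho>) = of_int x + of_int y * \<rho>"
    "x ^ 2 - x * y + y ^ 2 = a ^ 2 - a * b + b ^ 2" "3 dvd y"
proof -
  have \<rho>2: "\<rho> ^ 2 = - 1 - \<rho>"
    using root by (simp add: algebra_simps eq_neg_iff_add_eq_0)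
  have "\<not> 3 dvd a + b"
    using N three_dvd_norm_if_three_dvd_trace by blast
  then have "3 dvd b \<or> 3 dvd a \<or> 3 dvd a - b"
    by presburger
  then consider "3 dvd b" | "3 dvd a" | "3 dvd a - b"
    by blast
  then show thesis
  proof cases
    case 1
    then show thesis
      using that[of 0 a b] by simp
  next
    case 2
    have "\<rho> ^ 2 * (of_int a + of_int b * \<rho>) = of_int a * \<rho> ^ 2 + of_int b * \<rho> ^ 3"
      by (simp add: algebra_simps power2_eq_square power3_eq_cube)
    also have "\<dots> = of_int (b - a) + of_int (- a) * \<rho>"
      unfolding Phi3_root_cube[OF root] \<rho>2 by (simp add: algebra_simps)
    finally show thesis
      using that[of 2 "b - a" "- a"] 2 by (simp add: power2_eq_square algebra_simps)
  next
    case 3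
    have "\<rho> * (of_int a + of_int b * \<rho>) = of_int a * \<rho> + of_int b * \<rho> ^ 2"
      by (simp add: algebra_simps power2_eq_square)
    also have "\<dots> = of_int (- b) + of_int (a - b) * \<rho>"
      unfolding \<rho>2 by (simp add: algebra_simps)
    finally show thesis
      using that[of 1 "- b" "a - b"] 3 by (simp add: power2_eq_square algebra_simps)
  qed
qed

lemma sign_normalize_mod_9:
  fixes z :: int
  assumes "\<not> 3 dvd z"
  obtains s \<delta> :: int where "s \<in> {1, -1}" "9 dvd s * z - \<delta>" "z ^ 2 mod 9 \<in> {1, 4, 7}"
    "z ^ 2 mod 9 = 1 \<longrightarrow> \<delta> = 1" "z ^ 2 mod 9 = 4 \<longrightarrow> \<delta> = 2" "z ^ 2 mod 9 = 7 \<longrightarrow> \<delta> = 4"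
proof -
  have "z mod 9 = 1 \<or> z mod 9 = 2 \<or> z mod 9 = 4 \<or> (- z) mod 9 = 1 \<or> (- z) mod 9 = 2 \<or> (- z) mod 9 = 4"
    using assms by presburger
  then obtain s :: int where s: "s \<in> {1, -1}" "(s * z) mod 9 \<in> {1, 2, 4}"
    by (metis insertCI mult_1 mult_minus1)
  define \<delta> where "\<delta> = (s * z) mod 9"
  have "z ^ 2 = (s * z) ^ 2"
    using s(1) by (auto simp: power2_eq_square)
  then have "z ^ 2 mod 9 = \<delta> ^ 2 mod 9"
    unfolding \<delta>_def by (metis power_mod)
  moreover have "9 dvd s * z - \<delta>"
    unfolding \<delta>_def by (simp add: minus_mod_eq_mult_div)
  moreover have "\<delta> \<in> {1, 2, 4}"
    using s(2) unfolding \<delta>_def .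
  ultimately show thesis
    using that[OF s(1)] by auto
qed

lemma Phi3_root_expansion_times_1_minus:
  fixes \<rho> :: "'a :: comm_ring_1"
  assumes root: "\<rho> ^ 2 + \<rho> + 1 = 0"
    and z: "z = of_int \<delta> + 3 * of_int A * (\<rho> - 1) + 9 * of_int B"
  shows "z * (1 - \<rho>) = of_int \<delta> * (1 - \<rho>) + 9 * of_int A + 9 * of_int (B - A) * (1 - \<rho>)"
proof -
  have "(\<rho> - 1) * (1 - \<rho>) = 3 * \<rho> - (\<rho> ^ 2 + \<rho> + 1)"
    by (simp add: algebra_simps power2_eq_square)
  then have lam2: "(\<rho> - 1) * (1 - \<rho>) = 3 - 3 * (1 - \<rho>)"
    using root by simp
  have "z * (1 - \<rho>) = of_int \<delta> * (1 - \<rho>) + 3 * of_int A * ((\<rho> - 1) * (1 - \<rho>)) + 9 * of_int B * (1 - \<rho>)"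
    unfolding z by (simp add: algebra_simps)
  also have "\<dots> = of_int \<delta> * (1 - \<rho>) + 9 * of_int A + 9 * of_int (B - A) * (1 - \<rho>)"
    unfolding lam2 by (simp add: algebra_simps)
  finally show ?thesis .
qed

lemma evc_at_Phi3_root:
  assumes "z ^ 2 + z + 1 = 0" "f = [:1, 1, 1:] * q + [:a, b:]"
  shows "evc f z = of_int a + of_int b * z"
proof -
  have "evc f z = (z ^ 2 + z + 1) * evc q z + of_int a + of_int b * z"
    unfolding assms(2) by (simp add: algebra_simps power2_eq_square)
  then show ?thesis
    using assms(1) by simp
qed

lemma norm_evc_at_Phi3_root:
  assumes root: "\<rho> ^ 2 + \<rho> + 1 = 0" and f: "f = [:1, 1, 1:] * q + [:a, b:]"
  shows "evc f \<rho> * evc f (\<rho> ^ 2) = of_int (a ^ 2 - a * b + b ^ 2)"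
  using evc_at_Phi3_root[OF root f] evc_at_Phi3_root[OF Phi3_root_square[OF root] f]
    norm_at_Phi3_root[OF root] by simp

lemma not_3_dvd_poly_1_if_norm:
  assumes root: "\<rho> ^ 2 + \<rho> + 1 = 0"
    and N: "evc f \<rho> * evc f (\<rho> ^ 2) = of_int n" and n3: "\<not> 3 dvd n"
  shows "\<not> 3 dvd poly f 1"
proof
  assume f1: "3 dvd poly f 1"
  obtain q a b where f: "f = [:1, 1, 1:] * q + [:a, b:]"
    using poly_div_Phi3 by blast
  have "n = a ^ 2 - a * b + b ^ 2"
    using N norm_evc_at_Phi3_root[OF root f] by (metis of_int_eq_iff)
  moreover have "poly f 1 = 3 * poly q 1 + (a + b)"
    unfolding f by simp
  then have "3 dvd a + b"
    using f1 by presburger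
  ultimately show False
    using n3 three_dvd_norm_if_three_dvd_trace by blast
qed

lemma normalized_value_at_Phi3_root:
  assumes root: "\<rho> ^ 2 + \<rho> + 1 = 0"
    and N: "evc f \<rho> * evc f (\<rho> ^ 2) = of_int n" and n3: "\<not> 3 dvd n"
  shows "\<exists>(\<delta>::int) (J::nat) (s::int) (A::int) (b::int).
        n mod 9 \<in> {1, 4, 7} \<and>
        (n mod 9 = 1 \<longrightarrow> \<delta> = 1) \<and> (n mod 9 = 4 \<longrightarrow> \<delta> = 2) \<and> (n mod 9 = 7 \<longrightarrow> \<delta> = 4) \<and>
        J \<in> {0, 1, 2} \<and> s \<in> {1, -1} \<and>
        of_int s * \<rho> ^ J * evc f \<rho> = of_int \<delta> + 3 * of_int A * (\<rho> - 1) + 9 * of_int b \<and>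
        of_int s * \<rho> ^ J * evc f \<rho> * (1 - \<rho>)
          = of_int \<delta> * (1 - \<rho>) + 9 * of_int A + 9 * of_int (b - A) * (1 - \<rho>)"
proof -
  obtain q a b where f: "f = [:1, 1, 1:] * q + [:a, b:]"
    using poly_div_Phi3 by blast
  have n: "n = a ^ 2 - a * b + b ^ 2"
    using N norm_evc_at_Phi3_root[OF root f] by (metis of_int_eq_iff)
  obtain J x y where J: "J \<in> {0, 1, 2}" and rot: "\<rho> ^ J * evc f \<rho> = of_int x + of_int y * \<rho>"
    and xy: "x ^ 2 - x * y + y ^ 2 = n" and "3 dvd y"
    using rotate_into_3_dvd_coeff[OF root n3[unfolded n]] evc_at_Phi3_root[OF root f] n by metis
  then obtain A' where y: "y = 3 * A'"
    by blast
  have n9: "n = (x + y) ^ 2 + (- x * A') * 9"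
    using xy unfolding y by (simp add: power2_eq_square algebra_simps)
  have "\<not> 3 dvd x + y"
    using n3 xy three_dvd_norm_if_three_dvd_trace by blast
  then obtain s \<delta> where s: "s \<in> {1, -1}" and "9 dvd s * (x + y) - \<delta>"
    and \<delta>: "(x + y) ^ 2 mod 9 \<in> {1, 4, 7}" "(x + y) ^ 2 mod 9 = 1 \<longrightarrow> \<delta> = 1"
      "(x + y) ^ 2 mod 9 = 4 \<longrightarrow> \<delta> = 2" "(x + y) ^ 2 mod 9 = 7 \<longrightarrow> \<delta> = 4"
    by (rule sign_normalize_mod_9)
  then obtain B where B: "s * (x + y) - \<delta> = 9 * B"
    by blast
  have "n mod 9 = (x + y) ^ 2 mod 9"
    unfolding n9 by (rule mod_mult_self1)
  note \<delta> = \<delta>[folded this]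
  have eq1: "of_int s * \<rho> ^ J * evc f \<rho> = of_int \<delta> + 3 * of_int (s * A') * (\<rho> - 1) + 9 * of_int B"
  proof -
    have "of_int s * \<rho> ^ J * evc f \<rho> = of_int (s * (x + y)) + of_int (s * y) * (\<rho> - 1)"
      using rot by (simp add: algebra_simps)
    also have "\<dots> = of_int \<delta> + 3 * of_int (s * A') * (\<rho> - 1) + 9 * of_int B"
      using B unfolding y by (simp add: algebra_simps)
    finally show ?thesis .
  qed
  note eq2 = Phi3_root_expansion_times_1_minus[OF root eq1]
  show ?thesis
    using \<delta> J s eq1 eq2 by blast
qed

theorem lemma4p1:
  fixes f :: "int poly" and n :: int
  assumes hN: "N1 f = of_int n"
    and h3: "\<not> (3 dvd n)"
  shows
    "(\<exists>(\<delta>::int) (J::nat) (s::int) (A::int) (b::int).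
        n mod 9 \<in> {1, 4, 7} \<and>
        (n mod 9 = 1 \<longrightarrow> \<delta> = 1) \<and> (n mod 9 = 4 \<longrightarrow> \<delta> = 2) \<and> (n mod 9 = 7 \<longrightarrow> \<delta> = 4) \<and>
        J \<in> {0, 1, 2} \<and> s \<in> {1, -1} \<and>
        of_int s * (omega 1) ^ J * evc f (omega 1)
          = of_int \<delta> + 3 * of_int A * (omega 1 - 1) + 9 * of_int b \<and>
        of_int s * (omega 1) ^ J * evc f (omega 1) * (1 - omega 1)
          = of_int \<delta> * (1 - omega 1) + 9 * of_int A + 9 * of_int (b - A) * (1 - omega 1))
   \<and> (\<forall>i\<ge>2. \<exists>h u. unit_form u \<and>
        evc u (omega i) * evc f (omega i) = 1 + (omega i - 1) ^ 5 * evc h (omega i))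
   \<and> (\<forall>i\<ge>2. \<forall>h u. unit_form u \<and>
        evc u (omega i) * evc f (omega i) = 1 + (omega i - 1) ^ 5 * evc h (omega i) \<and>
        3 dvd poly h 1 \<longrightarrow>
        (\<exists>t u'. unit_form u' \<and>
           evc u' (omega i) * evc f (omega i) = 1 + (omega i - 1) ^ 7 * evc t (omega i)))
   \<and> (\<forall>h u. unit_form u \<and>
        evc u (omega 2) * evc f (omega 2) = 1 + (omega 2 - 1) ^ 5 * evc h (omega 2) \<and>
        \<not> (3 dvd poly h 1) \<longrightarrow>
        (\<exists>u' t d. unit_form u' \<and> d \<in> {[:0, 1:], [:-1:]} \<and>
           (1 - omega 2) * evc u' (omega 2) * evc f (omega 2)
             = 1 - omega 2 + 3 * evc d (omega 2) + 3 * (omega 2 - 1) ^ 2 * evc t (omega 2)))"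
proof -
  have N: "evc f (omega 1) * evc f (omega 1 ^ 2) = of_int n"
    using hN unfolding N1_def .
  have f1: "\<not> 3 dvd poly f 1"
    by (rule not_3_dvd_poly_1_if_norm[OF omega_1_root N h3])
  note part1 = normalized_value_at_Phi3_root[OF omega_1_root N h3]
  note part2 = unit_mult_cong_1_mod_lam5[OF lam_dvd_omega_3 f1, unfolded ex_unit_values_lam_dvd_iff]
  note part3 = unit_mult_cong_1_mod_lam7[OF lam_dvd_omega_3, unfolded ex_unit_values_lam_dvd_iff]
  note part4 = unit_mult_lam_expansion_Phi9_root[OF omega_2_root]
  show ?thesis
    by (intro conjI allI impI part1 part2) (blast intro: part3 part4)+
qed

end
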